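(* Let $\beta_t>0$ for $t\in[0,1]$, set the base drift $f:=0$, and consider the Schr\"odinger bridge $\mathrm{d}X_t=\beta_t\nabla\log\Psi(X_t,t)\mathrm{d}t+\sqrt{\beta_t}\mathrm{d}W_t$ (equivalently $\mathrm{d}X_t=-\beta_t\nabla\log\widehat\Psi(X_t,t)\mathrm{d}t+\sqrt{\beta_t}\mathrm{d}\overline W_t$) between boundary distributions at $t=0$ and $t=1$. Define $\sigma_t^2:=\int_0^t\beta_\tau\,\mathrm{d}\tau$ and $\bar\sigma_t^2:=\int_t^1\beta_\tau\,\mathrm{d}\tau$. Then the posterior of $X_t$ given the boundary pair $(X_0,X_1)$ is $$q(X_t\mid X_0,X_1)=\mathcal N\big(X_t;\mu_t(X_0,X_1),\Sigma_t\big),\quad \mu_t=\frac{\bar\sigma_t^2}{\bar\sigma_t^2+\sigma_t^2}X_0+\frac{\sigma_t^2}{\bar\sigma_t^2+\sigma_t^2}X_1,\quad \Sigma_t=\frac{\sigma_t^2\bar\sigma_t^2}{\bar\sigma_t^2+\sigma_t^2}I.$$ Moreover, for a time discretization $0=t_0<\dots<t_N=1$ with $X_n:=X_{t_n}$, let $p(X_n\mid X_0,X_{n+1})$ denote the DDPM posterior, i.e. the conditional density of $X_{t_n}$ given $X_0$ and $X_{t_{n+1}}$ under the process $\mathrm{d}X_t=\sqrt{\beta_t}\,\mathrm{d}W_t$ started at $X_0$. Then for every $0\le n\le N-1$, $$q(X_n\mid X_0,X_N)=\int\prod_{k=n}^{N-1}p(X_k\mid X_0,X_{k+1})\,\mathr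m{d}X_{n+1}\cdots\mathrm{d}X_{N-1}.$$
   Context: $W_t$ is a standard $d$-dimensional Wiener process, $\overline W_t$ its reversed-time counterpart, and $\Psi,\widehat\Psi$ are the Schr\"odinger bridge potentials, solving $\partial_t\Psi=-\tfrac12\beta_t\Delta\Psi$, $\partial_t\widehat\Psi=\tfrac12\beta_t\Delta\widehat\Psi$ (the system with $f=0$) with $\Psi(\cdot,0)\widehat\Psi(\cdot,0)$ and $\Psi(\cdot,1)\widehat\Psi(\cdot,1)$ equal to the boundary densities at $t=0$ and $t=1$. $I$ is the $d\times d$ identity. Explicitly, with $\alpha_n^2:=\int_{t_n}^{t_{n+1}}\beta_\tau\mathrm{d}\tau$, $p(X_n\mid X_0,X_{n+1})=\mathcal N\big(X_n;\frac{\alpha_n^2}{\alpha_n^2+\sigma_{t_n}^2}X_0+\frac{\sigma_{t_n}^2}{\alpha_n^2+\sigma_{t_n}^2}X_{n+1},\frac{\sigma_{t_n}^2\alpha_n^2}{\alpha_n^2+\sigma_{t_n}^2}I\big)$. *)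

theory Defs
  imports "HOL-Probability.Probability"
begin

definition gdens :: "real \<Rightarrow> real^'d \<Rightarrow> real^'d \<Rightarrow> real" where
  "gdens v m x = (2 * pi * v) powr (- real CARD('d) / 2) * exp (- (norm (x - m))\<^sup>2 / (2 * v))"

definition sig2 :: "(real \<Rightarrow> real) \<Rightarrow> real \<Rightarrow> real" where
  "sig2 \<beta> t = integral {0..t} \<beta>"

definition sigbar2 :: "(real \<Rightarrow> real) \<Rightarrow> real \<Rightarrow> real" where
  "sigbar2 \<beta> t = integral {t..1} \<beta>"

text \<open>Transition density of the reference process dX = sqrt(beta_t) dW from x at time s
  to y at time u (s < u): N(y; x, (int_s^u beta) I).\<close>
definition kern :: "(real \<Rightarrow> real) \<Rightarrow> real \<Rightarrow> real \<Rightarrow> real^'d \<Rightarrow> real^'d \<Rightarrow> real" where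
  "kern \<beta> s u x y = gdens (integral {s..u} \<beta>) x y"

text \<open>Joint density of (X_0, X_t, X_1) under the Schroedinger bridge with potentials
  Psi, hatPsi (path measure hatPsi(X_0,0) Psi(X_1,1) times the reference path measure).\<close>
definition sb_joint3 ::
  "(real \<Rightarrow> real) \<Rightarrow> (real^'d \<Rightarrow> real \<Rightarrow> real) \<Rightarrow> (real^'d \<Rightarrow> real \<Rightarrow> real)
     \<Rightarrow> real \<Rightarrow> real^'d \<Rightarrow> real^'d \<Rightarrow> real^'d \<Rightarrow> real" where
  "sb_joint3 \<beta> \<Psi> \<Psi>h t x0 x x1 =
     \<Psi>h x0 0 * kern \<beta> 0 t x0 x * kern \<beta> t 1 x x1 * \<Psi> x1 1"

definition sb_post ::
  "(real \<Rightarrow> real) \<Rightarrow> (real^'d \<Rightarrow> real \<Rightarrow> real) \<Rightarrow> (real^'d \<Rightarrow> real \<Rightarrow> real)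
     \<Rightarrow> real \<Rightarrow> real^'d \<Rightarrow> real^'d \<Rightarrow> real^'d \<Rightarrow> real" where
  "sb_post \<beta> \<Psi> \<Psi>h t x0 x1 x =
     sb_joint3 \<beta> \<Psi> \<Psi>h t x0 x x1 / (\<integral>y. sb_joint3 \<beta> \<Psi> \<Psi>h t x0 y x1 \<partial>lborel)"

text \<open>DDPM posterior p(X_s = x | X_0 = x0, X_u = xu) (0 < s < u) of the reference process
  dX = sqrt(beta_t) dW started at x0: Bayes' rule.\<close>
definition ddpm_post ::
  "(real \<Rightarrow> real) \<Rightarrow> real \<Rightarrow> real \<Rightarrow> real^'d \<Rightarrow> real^'d \<Rightarrow> real^'d \<Rightarrow> real" where
  "ddpm_post \<beta> s u x0 xu x = kern \<beta> 0 s x0 x * kern \<beta> s u x xu / kern \<beta> 0 u x0 xu"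

end

theory Submission
  imports Defs
begin

text \<open>
  The factor \<open>\<Psi>h(x0,0) \<Psi>(x1,1)\<close> of the bridge density does not depend on the
  intermediate point, so it cancels in the posterior, which is therefore the Brownian-bridge
  density \<open>k(0,t; x0,x) k(t,1; x,x1) / k(0,1; x0,x1)\<close> of the reference process
  (with Gaussian kernels \<open>k\<close> of variance \<open>\<integral> \<beta>\<close>). Completing the square in the exponent
  turns this ratio into the stated Gaussian. For the second claim, the product of the DDPM
  posteriors telescopes to \<open>k(0,t\<^sub>n; x0,x) / k(0,1; x0,xN)\<close> times the density of the reference
  path \<open>x = X\<^sub>n, X\<^sub>n\<^sub>+\<^sub>1, \<dots>, X\<^sub>N = xN\<close>; integrating out the intermediate points with the
  Chapman-Kolmogorov equation leaves \<open>k(t\<^sub>n,1; x,xN)\<close>, i.e. again the bridge density.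
\<close>

lemma integral_pos_real:
  fixes f :: "real \<Rightarrow> real"
  assumes f: "f integrable_on {a..b}" and pos: "\<And>x. x \<in> {a..b} \<Longrightarrow> 0 < f x" and "a < b"
  shows "0 < integral {a..b} f"
proof -
  have nonneg: "\<And>x. x \<in> {a..b} \<Longrightarrow> 0 \<le> f x"
    using pos less_imp_le by blast
  have L: "integrable (lebesgue_on {a..b}) f"
    by (rule absolutely_integrable_imp_integrable[OF nonnegative_absolutely_integrable_1[OF f nonneg]]) auto
  have eq: "integral\<^sup>L (lebesgue_on {a..b}) f = integral {a..b} f"
    using L by (intro lebesgue_integral_eq_integral) auto
  have "integral {a..b} f \<noteq> 0"
  proof
    assume "integral {a..b} f = 0"
    then have "AE x in lebesgue_on {a..b}. f x = 0"
      using integral_nonneg_eq_0_iff_AE[OF L] eq nonneg by (simp add: AE_restrict_space_iff)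
    moreover have "AE x in lebesgue_on {a..b}. f x \<noteq> 0"
      using pos by (intro AE_I2) (force simp: space_restrict_space)
    ultimately have "AE x in lebesgue_on {a..b}. False"
      by eventually_elim auto
    then have "emeasure (lebesgue_on {a..b}) (space (lebesgue_on {a..b})) = 0"
      by (metis ae_filter_eq_bot_iff trivial_limit_def)
    with \<open>a < b\<close> show False
      by (simp add: emeasure_restrict_space space_restrict_space)
  qed
  moreover have "0 \<le> integral {a..b} f"
    using f nonneg by (rule integral_nonneg)
  ultimately show ?thesis
    by simp
qed

lemma integral_beta_pos:
  fixes \<beta> :: "real \<Rightarrow> real"
  assumes "\<forall>t\<in>{0..1}. \<beta> t > 0" and "\<beta> integrable_on {0..1}"
    and "0 \<le> s" "s < u" "u \<le> 1"
  shows "0 < integral {s..u} \<beta>"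
proof (rule integral_pos_real)
  show "\<beta> integrable_on {s..u}"
    using integrable_subinterval_real[OF assms(2)] assms by auto
qed (use assms in auto)

lemma integral_beta_combine:
  fixes \<beta> :: "real \<Rightarrow> real"
  assumes "\<beta> integrable_on {0..1}" and "0 \<le> s" "s \<le> t" "t \<le> u" "u \<le> 1"
  shows "integral {s..t} \<beta> + integral {t..u} \<beta> = integral {s..u} \<beta>"
proof -
  have "\<beta> integrable_on {s..u}"
    using integrable_subinterval_real[OF assms(1)] assms by auto
  then show ?thesis
    using assms Henstock_Kurzweil_Integration.integral_combine by metis
qed

subsection \<open>Isotropic Gaussian densities\<close>

lemma gdens_pos: "0 < v \<Longrightarrow> 0 < gdens v m x"
  unfolding gdens_def by simp

lemma gdens_nonneg: "0 \<le> gdens v m x"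
  unfolding gdens_def by simp

lemma gdens_measurable [measurable]:
  fixes f g :: "'a \<Rightarrow> real^'d"
  assumes [measurable]: "f \<in> borel_measurable M" "g \<in> borel_measurable M"
  shows "(\<lambda>w. gdens v (f w) (g w)) \<in> borel_measurable M"
  unfolding gdens_def by measurable

lemma gdens_eq_prod_normal_density:
  fixes m x :: "real^'d"
  assumes v: "0 < v"
  shows "gdens v m x = (\<Prod>b\<in>Basis. normal_density (m \<bullet> b) (sqrt v) (x \<bullet> b))"
proof -
  have "(\<Prod>b\<in>Basis. normal_density (m \<bullet> b) (sqrt v) (x \<bullet> b))
      = (\<Prod>b\<in>(Basis::(real^'d) set). (2 * pi * v) powr (-1/2) * exp (- ((x - m) \<bullet> b)\<^sup>2 / (2 * v)))"
    unfolding normal_density_def using v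
    by (intro prod.cong refl) (simp add: inner_diff_left powr_minus_divide powr_half_sqrt)
  also have "\<dots> = ((2 * pi * v) powr (-1/2)) ^ CARD('d)
      * exp (\<Sum>b\<in>(Basis::(real^'d) set). - ((x - m) \<bullet> b)\<^sup>2 / (2 * v))"
    by (simp add: prod.distrib exp_sum)
  also have "((2 * pi * v) powr (-1/2)) ^ CARD('d) = (2 * pi * v) powr (- real CARD('d) / 2)"
    using v by (simp add: powr_realpow[symmetric] powr_powr)
  also have "(\<Sum>b\<in>(Basis::(real^'d) set). - ((x - m) \<bullet> b)\<^sup>2 / (2 * v)) = - (norm (x - m))\<^sup>2 / (2 * v)"
    by (subst power2_norm_eq_inner)
      (simp add: euclidean_inner[of "x - m" "x - m"] power2_eq_square sum_divide_distrib[symmetric] sum_negf)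
  finally show ?thesis
    unfolding gdens_def by simp
qed

lemma nn_integral_gdens:
  fixes m :: "real^'d"
  assumes v: "0 < v"
  shows "(\<integral>\<^sup>+x. ennreal (gdens v m x) \<partial>lborel) = 1"
proof -
  have "(\<integral>\<^sup>+x. ennreal (gdens v m x) \<partial>lborel)
      = (\<integral>\<^sup>+x. (\<Prod>b\<in>Basis. ennreal (normal_density (m \<bullet> b) (sqrt v) (x \<bullet> b))) \<partial>lborel)"
    using v by (intro nn_integral_cong) (simp add: gdens_eq_prod_normal_density prod_ennreal)
  also have "\<dots> = (\<Prod>b\<in>(Basis::(real^'d) set). \<integral>\<^sup>+y. ennreal (normal_density (m \<bullet> b) (sqrt v) y) \<partial>lborel)"
    by (rule nn_integral_lborel_prod) auto
  also have "\<dots> = 1"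
    using v by (intro prod.neutral ballI)
      (simp add: nn_integral_eq_integral integrable_normal_density integral_normal_density)
  finally show ?thesis .
qed

lemma norm_sq_split_at_bridge_mean:
  fixes x y z :: "'a::real_inner"
  assumes a: "0 < a" and b: "0 < b"
  shows "(norm (y - x))\<^sup>2 / (2 * a) + (norm (z - y))\<^sup>2 / (2 * b)
       = (norm (z - x))\<^sup>2 / (2 * (a + b))
         + (norm (y - ((b / (a + b)) *\<^sub>R x + (a / (a + b)) *\<^sub>R z)))\<^sup>2 / (2 * (a * b / (a + b)))"
proof -
  define m where "m = (b / (a + b)) *\<^sub>R x + (a / (a + b)) *\<^sub>R z"
  define u where "u = y - x"
  define w where "w = z - y"
  have ab: "0 < a + b"
    using a b by simp
  have "(a + b) *\<^sub>R (y - m)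
      = (a + b) *\<^sub>R y - (((a + b) * (b / (a + b))) *\<^sub>R x + ((a + b) * (a / (a + b))) *\<^sub>R z)"
    unfolding m_def by (simp only: scaleR_diff_right scaleR_add_right scaleR_scaleR)
  also have "\<dots> = (a + b) *\<^sub>R y - (b *\<^sub>R x + a *\<^sub>R z)"
    using ab by simp
  also have "\<dots> = b *\<^sub>R u - a *\<^sub>R w"
    by (simp add: u_def w_def algebra_simps)
  finally have "(a + b) * norm (y - m) = norm (b *\<^sub>R u - a *\<^sub>R w)"
    using ab by (metis norm_scaleR abs_of_pos)
  then have "(norm (b *\<^sub>R u - a *\<^sub>R w))\<^sup>2 = (a + b)\<^sup>2 * (norm (y - m))\<^sup>2"
    by (simp flip: power_mult_distrib)
  moreover have "(norm (b *\<^sub>R u - a *\<^sub>R w))\<^sup>2 = b\<^sup>2 * (norm u)\<^sup>2 - 2 * a * b * (u \<bullet> w) + a\<^sup>2 * (norm w)\<^sup>2"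
    unfolding power2_norm_eq_inner by (simp add: inner_simps inner_commute power2_eq_square algebra_simps)
  moreover have "z - x = u + w"
    by (simp add: u_def w_def)
  then have "(norm (z - x))\<^sup>2 = (norm u)\<^sup>2 + 2 * (u \<bullet> w) + (norm w)\<^sup>2"
    by (simp add: power2_norm_eq_inner inner_simps inner_commute)
  ultimately show ?thesis
    unfolding m_def[symmetric] u_def[symmetric] w_def[symmetric]
    using a b ab by (simp add: divide_simps) (simp add: algebra_simps power2_eq_square)
qed

lemma gdens_mult_gdens:
  fixes x y z :: "real^'d"
  assumes a: "0 < a" and b: "0 < b"
  shows "gdens a x y * gdens b y z
       = gdens (a + b) x z * gdens (a * b / (a + b)) ((b / (a + b)) *\<^sub>R x + (a / (a + b)) *\<^sub>R z) y"
proof -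
  define p :: real where "p = - real CARD('d) / 2"
  define m where "m = (b / (a + b)) *\<^sub>R x + (a / (a + b)) *\<^sub>R z"
  have "(2 * pi * a) * (2 * pi * b) = (2 * pi * (a + b)) * (2 * pi * (a * b / (a + b)))"
    using a b by (simp add: field_simps)
  then have normalisation: "(2 * pi * a) powr p * (2 * pi * b) powr p
      = (2 * pi * (a + b)) powr p * (2 * pi * (a * b / (a + b))) powr p"
    by (simp flip: powr_mult)
  have exponent: "exp (- (norm (y - x))\<^sup>2 / (2 * a)) * exp (- (norm (z - y))\<^sup>2 / (2 * b))
      = exp (- (norm (z - x))\<^sup>2 / (2 * (a + b))) * exp (- (norm (y - m))\<^sup>2 / (2 * (a * b / (a + b))))"
    unfolding exp_add[symmetric] m_def using norm_sq_split_at_bridge_mean[OF a b, of y x z]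
    by (simp only: minus_divide_left[symmetric] minus_add_distrib[symmetric])
  have "gdens a x y * gdens b y z = ((2 * pi * a) powr p * (2 * pi * b) powr p)
      * (exp (- (norm (y - x))\<^sup>2 / (2 * a)) * exp (- (norm (z - y))\<^sup>2 / (2 * b)))"
    unfolding gdens_def p_def by (simp only: ac_simps)
  also have "\<dots> = ((2 * pi * (a + b)) powr p * (2 * pi * (a * b / (a + b))) powr p)
      * (exp (- (norm (z - x))\<^sup>2 / (2 * (a + b))) * exp (- (norm (y - m))\<^sup>2 / (2 * (a * b / (a + b)))))"
    by (simp only: normalisation exponent)
  also have "\<dots> = gdens (a + b) x z * gdens (a * b / (a + b)) m y"
    unfolding gdens_def p_def by (simp only: ac_simps)
  finally show ?thesis
    unfolding m_def .
qed

lemma nn_integral_gdens_mult_gdens: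
  fixes x z :: "real^'d"
  assumes a: "0 < a" and b: "0 < b"
  shows "(\<integral>\<^sup>+y. ennreal (gdens a x y * gdens b y z) \<partial>lborel) = ennreal (gdens (a + b) x z)"
proof -
  let ?m = "(b / (a + b)) *\<^sub>R x + (a / (a + b)) *\<^sub>R z"
  have "(\<integral>\<^sup>+y. ennreal (gdens a x y * gdens b y z) \<partial>lborel)
      = (\<integral>\<^sup>+y. ennreal (gdens (a + b) x z) * ennreal (gdens (a * b / (a + b)) ?m y) \<partial>lborel)"
    using a b by (intro nn_integral_cong) (simp add: gdens_mult_gdens ennreal_mult' gdens_nonneg)
  also have "\<dots> = ennreal (gdens (a + b) x z) * (\<integral>\<^sup>+y. ennreal (gdens (a * b / (a + b)) ?m y) \<partial>lborel)"
    by (rule nn_integral_cmult) measurable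
  also have "\<dots> = ennreal (gdens (a + b) x z)"
    using a b by (simp add: nn_integral_gdens)
  finally show ?thesis .
qed

lemma kern_pos:
  fixes \<beta> :: "real \<Rightarrow> real"
  assumes "\<forall>t\<in>{0..1}. \<beta> t > 0" and "\<beta> integrable_on {0..1}"
    and "0 \<le> s" "s < u" "u \<le> 1"
  shows "0 < kern \<beta> s u x y"
  unfolding kern_def using integral_beta_pos[OF assms] by (rule gdens_pos)

lemma kern_nonneg: "0 \<le> kern \<beta> s u x y"
  unfolding kern_def by (rule gdens_nonneg)

lemma kern_measurable [measurable]:
  fixes f g :: "'a \<Rightarrow> real^'d"
  assumes [measurable]: "f \<in> borel_measurable M" "g \<in> borel_measurable M"
  shows "(\<lambda>w. kern \<beta> s u (f w) (g w)) \<in> borel_measurable M"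
  unfolding kern_def by measurable

lemma nn_integral_kern_mult_kern:
  fixes \<beta> :: "real \<Rightarrow> real" and x z :: "real^'d"
  assumes pos: "\<forall>t\<in>{0..1}. \<beta> t > 0" and int: "\<beta> integrable_on {0..1}"
    and "0 \<le> s" "s < t" "t < u" "u \<le> 1"
  shows "(\<integral>\<^sup>+y. ennreal (kern \<beta> s t x y * kern \<beta> t u y z) \<partial>lborel) = ennreal (kern \<beta> s u x z)"
proof -
  have "0 < integral {s..t} \<beta>" "0 < integral {t..u} \<beta>"
    using assms by (auto intro!: integral_beta_pos)
  moreover have "integral {s..t} \<beta> + integral {t..u} \<beta> = integral {s..u} \<beta>"
    using assms by (intro integral_beta_combine) auto
  ultimately show ?thesis
    unfolding kern_def by (metis nn_integral_gdens_mult_gdens)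
qed

lemma integral_kern_mult_kern:
  fixes \<beta> :: "real \<Rightarrow> real" and x z :: "real^'d"
  assumes "\<forall>t\<in>{0..1}. \<beta> t > 0" and "\<beta> integrable_on {0..1}"
    and "0 \<le> s" "s < t" "t < u" "u \<le> 1"
  shows "(\<integral>y. kern \<beta> s t x y * kern \<beta> t u y z \<partial>lborel) = kern \<beta> s u x z"
proof -
  have "(\<integral>y. kern \<beta> s t x y * kern \<beta> t u y z \<partial>lborel)
      = enn2real (\<integral>\<^sup>+y. ennreal (kern \<beta> s t x y * kern \<beta> t u y z) \<partial>lborel)"
    by (rule integral_eq_nn_integral) (auto simp: kern_nonneg)
  then show ?thesis
    by (simp add: nn_integral_kern_mult_kern[OF assms] kern_nonneg)
qed

subsection \<open>The bridge posterior\<close>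

lemma sb_post_eq_kern_ratio:
  fixes \<beta> :: "real \<Rightarrow> real" and x0 x1 x :: "real^'d"
  assumes "\<forall>t\<in>{0..1}. \<beta> t > 0" and "\<beta> integrable_on {0..1}"
    and "0 < t" "t < 1" and boundary_pos: "0 < \<Psi>h x0 0 * \<Psi> x1 1"
  shows "sb_post \<beta> \<Psi> \<Psi>h t x0 x1 x = kern \<beta> 0 t x0 x * kern \<beta> t 1 x x1 / kern \<beta> 0 1 x0 x1"
proof -
  have joint: "\<And>y. sb_joint3 \<beta> \<Psi> \<Psi>h t x0 y x1 = \<Psi>h x0 0 * \<Psi> x1 1 * (kern \<beta> 0 t x0 y * kern \<beta> t 1 y x1)"
    unfolding sb_joint3_def by (simp only: ac_simps)
  have "(\<integral>y. kern \<beta> 0 t x0 y * kern \<beta> t 1 y x1 \<partial>lborel) = kern \<beta> 0 1 x0 x1"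
    using assms by (intro integral_kern_mult_kern) auto
  then have normaliser: "(\<integral>y. \<Psi>h x0 0 * \<Psi> x1 1 * (kern \<beta> 0 t x0 y * kern \<beta> t 1 y x1) \<partial>lborel)
      = \<Psi>h x0 0 * \<Psi> x1 1 * kern \<beta> 0 1 x0 x1"
    by simp
  have "\<Psi>h x0 0 \<noteq> 0" "\<Psi> x1 1 \<noteq> 0"
    using boundary_pos by auto
  then show ?thesis
    unfolding sb_post_def joint normaliser by simp
qed

lemma sb_post_gaussian:
  fixes \<beta> :: "real \<Rightarrow> real" and x0 x1 x :: "real^'d"
  assumes pos: "\<forall>t\<in>{0..1}. \<beta> t > 0" and int: "\<beta> integrable_on {0..1}"
    and t: "0 < t" "t < 1" and boundary_pos: "0 < \<Psi>h x0 0 * \<Psi> x1 1"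
  shows "sb_post \<beta> \<Psi> \<Psi>h t x0 x1 x =
          gdens (sig2 \<beta> t * sigbar2 \<beta> t / (sigbar2 \<beta> t + sig2 \<beta> t))
                ((sigbar2 \<beta> t / (sigbar2 \<beta> t + sig2 \<beta> t)) *\<^sub>R x0
                   + (sig2 \<beta> t / (sigbar2 \<beta> t + sig2 \<beta> t)) *\<^sub>R x1) x"
proof -
  define a where "a = sig2 \<beta> t"
  define b where "b = sigbar2 \<beta> t"
  have a: "0 < a" and b: "0 < b"
    unfolding a_def b_def sig2_def sigbar2_def using t by (auto intro!: integral_beta_pos[OF pos int])
  have "a + b = integral {0..1} \<beta>"
    unfolding a_def b_def sig2_def sigbar2_def using t by (intro integral_beta_combine[OF int]) auto
  then have "kern \<beta> 0 t x0 x * kern \<beta> t 1 x x1 / kern \<beta> 0 1 x0 x1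
      = gdens a x0 x * gdens b x x1 / gdens (a + b) x0 x1"
    by (simp add: kern_def a_def b_def sig2_def sigbar2_def)
  also have "\<dots> = gdens (a * b / (a + b)) ((b / (a + b)) *\<^sub>R x0 + (a / (a + b)) *\<^sub>R x1) x"
    using a b gdens_pos[of "a + b" x0 x1] by (simp add: gdens_mult_gdens)
  finally show ?thesis
    unfolding sb_post_eq_kern_ratio[where \<Psi>h = \<Psi>h and \<Psi> = \<Psi>, OF pos int t boundary_pos] a_def b_def
    by (simp add: add.commute)
qed

subsection \<open>Discretised reference paths\<close>

text \<open>
  The density of the reference process on the grid points \<open>tt (a+1), \<dots>, tt (b-1)\<close>, pinned
  to \<open>x\<close> at \<open>tt a\<close> and to \<open>z\<close> at \<open>tt b\<close>; the coordinates \<open>a\<close> and \<open>b\<close> of the path \<open>X\<close> are ignored.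
\<close>

definition path_dens ::
  "(real \<Rightarrow> real) \<Rightarrow> (nat \<Rightarrow> real) \<Rightarrow> nat \<Rightarrow> nat \<Rightarrow> real^'d \<Rightarrow> real^'d \<Rightarrow> (nat \<Rightarrow> real^'d) \<Rightarrow> real"
  where "path_dens \<beta> tt a b x z X =
    (\<Prod>k\<in>{a..<b}. kern \<beta> (tt k) (tt (Suc k)) ((X(a := x, b := z)) k) ((X(a := x, b := z)) (Suc k)))"

lemma fun_upd_upd_component_measurable [measurable]:
  fixes x z :: "'a::euclidean_space"
  shows "(\<lambda>X. (X(a := x, c := z)) j) \<in> borel_measurable (\<Pi>\<^sub>M i\<in>J. lborel)"
proof -
  consider "j = c" | "j = a" "j \<noteq> c" | "j \<notin> {a, c}" "j \<in> J" | "j \<notin> {a, c}" "j \<notin> J"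
    by blast
  then show ?thesis
  proof cases
    case 3
    then show ?thesis
      using measurable_component_singleton[of j J "\<lambda>_. lborel :: 'a measure"]
      by (simp add: measurable_lborel2)
  next
    case 4
    have "(\<lambda>X. (X(a := x, c := z)) j) \<in> borel_measurable (\<Pi>\<^sub>M i\<in>J. lborel)
        \<longleftrightarrow> (\<lambda>X. undefined :: 'a) \<in> borel_measurable (\<Pi>\<^sub>M i\<in>J. (lborel :: 'a measure))"
    proof (rule measurable_cong)
      fix X
      assume "X \<in> space (\<Pi>\<^sub>M i\<in>J. (lborel :: 'a measure))"
      then have "X j = undefined"
        using \<open>j \<notin> J\<close> unfolding space_PiM by (rule PiE_arb)
      with 4 show "(X(a := x, c := z)) j = undefined"
        by simp
    qed
    then show ?thesis
      by simp
  qed simp_all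
qed

lemma path_dens_measurable [measurable]:
  "path_dens \<beta> tt a b x z \<in> borel_measurable (\<Pi>\<^sub>M i\<in>I. lborel)"
  unfolding path_dens_def by measurable

lemma path_dens_nonneg: "0 \<le> path_dens \<beta> tt a b x z X"
  unfolding path_dens_def by (simp add: kern_nonneg prod_nonneg)

lemma path_dens_fun_upd_Suc:
  assumes "a < b"
  shows "path_dens \<beta> tt a (Suc b) x z (X(b := y))
       = path_dens \<beta> tt a b x y X * kern \<beta> (tt b) (tt (Suc b)) y z"
proof -
  let ?Y = "X(b := y, a := x, Suc b := z)" and ?Y' = "X(a := x, b := y)"
  have "\<And>k. k \<le> b \<Longrightarrow> ?Y k = ?Y' k"
    using assms by auto
  then have "(\<Prod>k\<in>{a..<b}. kern \<beta> (tt k) (tt (Suc k)) (?Y k) (?Y (Suc k)))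
      = (\<Prod>k\<in>{a..<b}. kern \<beta> (tt k) (tt (Suc k)) (?Y' k) (?Y' (Suc k)))"
    by (intro prod.cong) auto
  with assms show ?thesis
    unfolding path_dens_def by (simp add: prod.atLeastLessThan_Suc)
qed

lemma less_of_Suc_less_bounded:
  fixes f :: "nat \<Rightarrow> 'a::order"
  assumes Suc_less: "\<And>k. k < n \<Longrightarrow> f k < f (Suc k)" and "i < j" "j \<le> n"
  shows "f i < f j"
proof -
  have "Suc i \<le> j"
    using \<open>i < j\<close> by simp
  then show ?thesis
    using \<open>j \<le> n\<close>
  proof (induction j rule: dec_induct)
    case base
    then show ?case
      using Suc_less by simp
  next
    case (step j)
    then show ?case
      using Suc_less[of j] by simp
  qed
qed

lemma nn_integral_path_dens_Suc:
  fixes x z :: "real^'d"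
  assumes "a < c"
  shows "(\<integral>\<^sup>+X. ennreal (path_dens \<beta> tt a (Suc c) x z X) \<partial>(\<Pi>\<^sub>M i\<in>{a<..<Suc c}. lborel))
       = (\<integral>\<^sup>+y. (\<integral>\<^sup>+X. ennreal (path_dens \<beta> tt a c x y X) \<partial>(\<Pi>\<^sub>M i\<in>{a<..<c}. lborel))
                * ennreal (kern \<beta> (tt c) (tt (Suc c)) y z) \<partial>lborel)"
proof -
  interpret product_sigma_finite "\<lambda>_. lborel :: (real^'d) measure"
    by standard
  have "{a<..<Suc c} = insert c {a<..<c}"
    using assms by auto
  then have "(\<integral>\<^sup>+X. ennreal (path_dens \<beta> tt a (Suc c) x z X) \<partial>(\<Pi>\<^sub>M i\<in>{a<..<Suc c}. lborel))
      = (\<integral>\<^sup>+y. \<integral>\<^sup>+X. ennreal (path_dens \<beta> tt a (Suc c) x z (X(c := y))) \<partial>(\<Pi>\<^sub>M i\<in>{a<..<c}. lborel) \<partial>lborel)"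
    by (simp add: product_nn_integral_insert_rev)
  also have "\<dots> = (\<integral>\<^sup>+y. \<integral>\<^sup>+X. ennreal (path_dens \<beta> tt a c x y X)
      * ennreal (kern \<beta> (tt c) (tt (Suc c)) y z) \<partial>(\<Pi>\<^sub>M i\<in>{a<..<c}. lborel) \<partial>lborel)"
    using assms by (simp add: path_dens_fun_upd_Suc ennreal_mult' path_dens_nonneg)
  also have "\<dots> = (\<integral>\<^sup>+y. (\<integral>\<^sup>+X. ennreal (path_dens \<beta> tt a c x y X) \<partial>(\<Pi>\<^sub>M i\<in>{a<..<c}. lborel))
      * ennreal (kern \<beta> (tt c) (tt (Suc c)) y z) \<partial>lborel)"
    by (intro nn_integral_cong nn_integral_multc) measurable
  finally show ?thesis .
qed

lemma nn_integral_path_dens: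
  fixes \<beta> :: "real \<Rightarrow> real" and tt :: "nat \<Rightarrow> real" and x z :: "real^'d"
  assumes pos: "\<forall>t\<in>{0..1}. \<beta> t > 0" and int: "\<beta> integrable_on {0..1}"
    and "a < b" and start: "0 \<le> tt a" and "tt b \<le> 1" and "\<And>k. k < b \<Longrightarrow> tt k < tt (Suc k)"
  shows "(\<integral>\<^sup>+X. ennreal (path_dens \<beta> tt a b x z X) \<partial>(\<Pi>\<^sub>M i\<in>{a<..<b}. lborel))
       = ennreal (kern \<beta> (tt a) (tt b) x z)"
proof -
  have "Suc a \<le> b"
    using \<open>a < b\<close> by simp
  then show ?thesis
    using \<open>tt b \<le> 1\<close> \<open>\<And>k. k < b \<Longrightarrow> tt k < tt (Suc k)\<close>
  proof (induction b arbitrary: z rule: dec_induct)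
    case base
    have "{a<..<Suc a} = {}"
      by auto
    then show ?case
      by (simp add: PiM_empty nn_integral_count_space_finite path_dens_def)
  next
    case (step c)
    have "tt a < tt c"
      using less_of_Suc_less_bounded[of "Suc c" tt a c] step by simp
    have "tt c < tt (Suc c)"
      using step by simp
    then have "tt c \<le> 1"
      using step.prems(1) by simp
    moreover have "\<And>k. k < c \<Longrightarrow> tt k < tt (Suc k)"
      using step.prems(2) by simp
    ultimately have IH: "(\<integral>\<^sup>+X. ennreal (path_dens \<beta> tt a c x y X) \<partial>(\<Pi>\<^sub>M i\<in>{a<..<c}. lborel))
        = ennreal (kern \<beta> (tt a) (tt c) x y)" for y
      using step.IH by blast
    have "a < c"
      using step by simp
    then have "(\<integral>\<^sup>+X. ennreal (path_dens \<beta> tt a (Suc c) x z X) \<partial>(\<Pi>\<^sub>M i\<in>{a<..<Suc c}. lborel))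
        = (\<integral>\<^sup>+y. ennreal (kern \<beta> (tt a) (tt c) x y * kern \<beta> (tt c) (tt (Suc c)) y z) \<partial>lborel)"
      by (simp add: nn_integral_path_dens_Suc IH ennreal_mult kern_nonneg)
    also have "\<dots> = ennreal (kern \<beta> (tt a) (tt (Suc c)) x z)"
      using step start \<open>tt a < tt c\<close> \<open>tt c < tt (Suc c)\<close>
      by (intro nn_integral_kern_mult_kern[OF pos int]) auto
    finally show ?case .
  qed
qed

lemma integral_path_dens:
  fixes \<beta> :: "real \<Rightarrow> real" and tt :: "nat \<Rightarrow> real" and x z :: "real^'d"
  assumes "\<forall>t\<in>{0..1}. \<beta> t > 0" and "\<beta> integrable_on {0..1}"
    and "a < b" and "0 \<le> tt a" and "tt b \<le> 1" and "\<And>k. k < b \<Longrightarrow> tt k < tt (Suc k)"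
  shows "(\<integral>X. path_dens \<beta> tt a b x z X \<partial>(\<Pi>\<^sub>M i\<in>{a<..<b}. lborel)) = kern \<beta> (tt a) (tt b) x z"
proof -
  have "(\<integral>X. path_dens \<beta> tt a b x z X \<partial>(\<Pi>\<^sub>M i\<in>{a<..<b}. lborel))
      = enn2real (\<integral>\<^sup>+X. ennreal (path_dens \<beta> tt a b x z X) \<partial>(\<Pi>\<^sub>M i\<in>{a<..<b}. lborel))"
    by (rule integral_eq_nn_integral) (auto simp: path_dens_nonneg)
  also have "\<dots> = enn2real (ennreal (kern \<beta> (tt a) (tt b) x z))"
    by (simp only: nn_integral_path_dens[OF assms])
  finally show ?thesis
    by (simp add: kern_nonneg)
qed

lemma prod_telescope_atLeastLessThan:
  fixes g h :: "nat \<Rightarrow> 'a::field"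
  assumes "m \<le> n" and "\<And>k. m \<le> k \<Longrightarrow> k \<le> n \<Longrightarrow> g k \<noteq> 0"
  shows "(\<Prod>k\<in>{m..<n}. g k * h k / g (Suc k)) = g m / g n * (\<Prod>k\<in>{m..<n}. h k)"
  using assms
proof (induction n rule: dec_induct)
  case base
  then show ?case
    by simp
next
  case (step n)
  then show ?case
    by (simp add: prod.atLeastLessThan_Suc)
qed

lemma prod_ddpm_post_eq_path_dens:
  fixes \<beta> :: "real \<Rightarrow> real" and tt :: "nat \<Rightarrow> real" and x0 x xN :: "real^'d"
  assumes pos: "\<forall>t\<in>{0..1}. \<beta> t > 0" and int: "\<beta> integrable_on {0..1}"
    and grid: "tt 0 = 0" "tt N = 1" "\<forall>k<N. tt k < tt (Suc k)" and n: "1 \<le> n" "n < N"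
  shows "(\<Prod>k\<in>{n..<N}. ddpm_post \<beta> (tt k) (tt (Suc k)) x0
            ((X(n := x, N := xN)) (Suc k)) ((X(n := x, N := xN)) k))
       = kern \<beta> 0 (tt n) x0 x / kern \<beta> 0 1 x0 xN * path_dens \<beta> tt n N x xN X"
proof -
  let ?Y = "X(n := x, N := xN)"
  have "kern \<beta> 0 (tt k) x0 (?Y k) \<noteq> 0" if "n \<le> k" "k \<le> N" for k
  proof -
    have "tt 0 < tt k"
      using less_of_Suc_less_bounded[of N tt 0 k] grid n that by simp
    moreover have "tt k \<le> tt N"
      using less_of_Suc_less_bounded[of N tt k N] grid that by (cases "k = N") auto
    ultimately have "0 < kern \<beta> 0 (tt k) x0 (?Y k)"
      using grid by (intro kern_pos[OF pos int]) auto
    then show ?thesis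
      by simp
  qed
  then have "(\<Prod>k\<in>{n..<N}. kern \<beta> 0 (tt k) x0 (?Y k) * kern \<beta> (tt k) (tt (Suc k)) (?Y k) (?Y (Suc k))
        / kern \<beta> 0 (tt (Suc k)) x0 (?Y (Suc k)))
      = kern \<beta> 0 (tt n) x0 (?Y n) / kern \<beta> 0 (tt N) x0 (?Y N)
        * (\<Prod>k\<in>{n..<N}. kern \<beta> (tt k) (tt (Suc k)) (?Y k) (?Y (Suc k)))"
    using n by (intro prod_telescope_atLeastLessThan) auto
  with n grid show ?thesis
    unfolding ddpm_post_def path_dens_def by simp
qed

lemma sb_post_eq_integral_prod_ddpm_post:
  fixes \<beta> :: "real \<Rightarrow> real" and tt :: "nat \<Rightarrow> real" and x0 x xN :: "real^'d"
  assumes pos: "\<forall>t\<in>{0..1}. \<beta> t > 0" and int: "\<beta> integrable_on {0..1}"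
    and grid: "tt 0 = 0" "tt N = 1" "\<forall>k<N. tt k < tt (Suc k)" and n: "1 \<le> n" "n \<le> N - 1"
    and boundary_pos: "0 < \<Psi>h x0 0 * \<Psi> xN 1"
  shows "sb_post \<beta> \<Psi> \<Psi>h (tt n) x0 xN x =
    (\<integral>X. (\<Prod>k\<in>{n..<N}. ddpm_post \<beta> (tt k) (tt (Suc k)) x0
            ((X(n := x, N := xN)) (Suc k)) ((X(n := x, N := xN)) k)) \<partial>(\<Pi>\<^sub>M i\<in>{n<..<N}. lborel))"
proof -
  have "n < N"
    using n by simp
  have "0 < tt n"
    using less_of_Suc_less_bounded[of N tt 0 n] grid n \<open>n < N\<close> by simp
  have "tt n < 1"
    using less_of_Suc_less_bounded[of N tt n N] grid \<open>n < N\<close> by simp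
  have path_integral: "(\<integral>X. path_dens \<beta> tt n N x xN X \<partial>(\<Pi>\<^sub>M i\<in>{n<..<N}. lborel)) = kern \<beta> (tt n) 1 x xN"
    using integral_path_dens[where tt = tt, OF pos int \<open>n < N\<close>] grid \<open>0 < tt n\<close> by simp
  have "(\<integral>X. (\<Prod>k\<in>{n..<N}. ddpm_post \<beta> (tt k) (tt (Suc k)) x0
            ((X(n := x, N := xN)) (Suc k)) ((X(n := x, N := xN)) k)) \<partial>(\<Pi>\<^sub>M i\<in>{n<..<N}. lborel))
      = (\<integral>X. kern \<beta> 0 (tt n) x0 x / kern \<beta> 0 1 x0 xN * path_dens \<beta> tt n N x xN X \<partial>(\<Pi>\<^sub>M i\<in>{n<..<N}. lborel))"
    by (simp only: prod_ddpm_post_eq_path_dens[OF pos int grid n(1) \<open>n < N\<close>])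
  also have "\<dots> = kern \<beta> 0 (tt n) x0 x / kern \<beta> 0 1 x0 xN * kern \<beta> (tt n) 1 x xN"
    by (simp add: path_integral)
  finally show ?thesis
    using sb_post_eq_kern_ratio[where \<Psi>h = \<Psi>h and \<Psi> = \<Psi>, OF pos int \<open>0 < tt n\<close> \<open>tt n < 1\<close> boundary_pos]
    by simp
qed

theorem proposition3:
  fixes \<beta> :: "real \<Rightarrow> real"
    and \<Psi> \<Psi>h :: "real^'d \<Rightarrow> real \<Rightarrow> real"
    and \<rho>0 \<rho>1 :: "real^'d \<Rightarrow> real"
  assumes beta_pos: "\<forall>t\<in>{0..1}. \<beta> t > 0"
    and beta_int: "\<beta> integrable_on {0..1}"
    and Psi_nonneg: "\<forall>x. \<forall>t\<in>{0..1}. \<Psi> x t \<ge> 0 \<and> \<Psi>h x t \<ge> 0"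
    and Psi1_meas: "(\<lambda>x. \<Psi> x 1) \<in> borel_measurable lborel"
    and Psih0_meas: "(\<lambda>x. \<Psi>h x 0) \<in> borel_measurable lborel"
    and Psi_eq: "\<forall>t\<in>{0..<1}. \<forall>x. \<Psi> x t = (\<integral>y. kern \<beta> t 1 x y * \<Psi> y 1 \<partial>lborel)"
    and Psih_eq: "\<forall>t\<in>{0<..1}. \<forall>x. \<Psi>h x t = (\<integral>y. kern \<beta> 0 t y x * \<Psi>h y 0 \<partial>lborel)"
    and rho0_dens: "\<forall>x. \<rho>0 x \<ge> 0" "integrable lborel \<rho>0" "(\<integral>x. \<rho>0 x \<partial>lborel) = 1"
    and rho1_dens: "\<forall>x. \<rho>1 x \<ge> 0" "integrable lborel \<rho>1" "(\<integral>x. \<rho>1 x \<partial>lborel) = 1"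
    and bc0: "\<forall>x. \<Psi> x 0 * \<Psi>h x 0 = \<rho>0 x"
    and bc1: "\<forall>x. \<Psi> x 1 * \<Psi>h x 1 = \<rho>1 x"
  shows
    "(\<forall>t\<in>{0<..<1}. \<forall>x0 x1 x. \<Psi>h x0 0 * \<Psi> x1 1 > 0 \<longrightarrow>
        sb_post \<beta> \<Psi> \<Psi>h t x0 x1 x =
          gdens (sig2 \<beta> t * sigbar2 \<beta> t / (sigbar2 \<beta> t + sig2 \<beta> t))
                ((sigbar2 \<beta> t / (sigbar2 \<beta> t + sig2 \<beta> t)) *\<^sub>R x0
                   + (sig2 \<beta> t / (sigbar2 \<beta> t + sig2 \<beta> t)) *\<^sub>R x1) x)
     \<and>
     (\<forall>(N::nat) (tt::nat \<Rightarrow> real). tt 0 = 0 \<and> tt N = 1 \<and> (\<forall>k<N. tt k < tt (Suc k)) \<longrightarrow>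
        (\<forall>n x0 xN x. 1 \<le> n \<and> n \<le> N - 1 \<and> \<Psi>h x0 0 * \<Psi> xN 1 > 0 \<longrightarrow>
           sb_post \<beta> \<Psi> \<Psi>h (tt n) x0 xN x =
             (\<integral>X. (\<Prod>k\<in>{n..<N}. ddpm_post \<beta> (tt k) (tt (Suc k)) x0
                         ((X(n := x, N := xN)) (Suc k)) ((X(n := x, N := xN)) k))
                \<partial>(\<Pi>\<^sub>M i\<in>{n<..<N}. lborel))))"
  using sb_post_gaussian[OF beta_pos beta_int] sb_post_eq_integral_prod_ddpm_post[OF beta_pos beta_int]
  by auto

end
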